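(* Let $K^*\in\mathbb{N}$, $M>0$, $p\in\mathbb{N}$, let $\mathcal{Y}\subset\mathbb{R}^{K^*}$ be a closed set, let $f_*:[-M,M]^p\to\mathcal{Y}$ be continuous, and let $g_*:\mathcal{Y}^2\to\mathbb{R}$ be a conditionally positive definite kernel. Let $\sigma:\mathbb{R}\to\mathbb{R}$ be either the ReLU function or a function that is non-constant, continuous, bounded and monotonically increasing. Then for every $\varepsilon>0$, for sufficiently large $K\in\mathbb{N}$, $T=T(K)\in\mathbb{N}$ and $T'\in\mathbb{N}$, there exist $\boldsymbol A\in\mathbb{R}^{K\times T}$, $\boldsymbol B\in\mathbb{R}^{T\times p}$, $\boldsymbol c\in\mathbb{R}^T$, $\boldsymbol e\in\mathbb{R}^{T'}$, $\boldsymbol F\in\mathbb{R}^{T'\times p}$, $\boldsymbol o\in\mathbb{R}^{T'}$ such that \[ \Big| g_*\big(f_*(\boldsymbol x),f_*(\boldsymbol x')\big) - \big( \langle f_{\boldsymbol\psi}(\boldsymbol x), f_{\boldsymbol\psi}(\boldsymbol x')\rangle + u_{\boldsymbol\xi}(\boldsymbol x) + u_{\boldsymbol\xi}(\boldsymbol x')\big)\Big| < \varepsilon \] for all $(\boldsymbol x,\boldsymbol x')\in[-M,M]^{2p}$, where $f_{\boldsymbol\psi}(\boldsymbol x)=\boldsymbol A\,\boldsymbol\sigma(\boldsymbol B\boldsymbol x+\boldsymbol c)\in\mathbb{R}^K$ and $u_{\boldsymbol\xi}(\boldsymbol x)=\langle \boldsymbol e,\boldsymbol\sigma(\boldsymbol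 F\boldsymbol x+\boldsymbol o)\rangle\in\mathbb{R}$, and $\boldsymbol\sigma$ denotes $\sigma$ applied element-wise.
   Context: A kernel on $\mathcal{Y}^2$ is a symmetric continuous function $g:\mathcal{Y}^2\to\mathbb{R}$. A kernel $g$ is conditionally positive definite (CPD) if $\sum_{i=1}^n\sum_{j=1}^n c_ic_j g(\boldsymbol y_i,\boldsymbol y_j)\ge 0$ for all $n\in\mathbb{N}$, all $\boldsymbol y_1,\dots,\boldsymbol y_n\in\mathcal{Y}$ and all $c_1,\dots,c_n\in\mathbb{R}$ with $\sum_{i=1}^n c_i=0$. $\langle\cdot,\cdot\rangle$ is the Euclidean inner product. *)

theory Defs
  imports "HOL-Analysis.Analysis"
begin

definition is_kernel_on :: "'a::topological_space set \<Rightarrow> ('a \<Rightarrow> 'a \<Rightarrow> real) \<Rightarrow> bool" where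
  "is_kernel_on Y g \<longleftrightarrow>
     (\<forall>y\<in>Y. \<forall>y'\<in>Y. g y y' = g y' y) \<and> continuous_on (Y \<times> Y) (\<lambda>(y, y'). g y y')"

definition cpd_kernel_on :: "'a::topological_space set \<Rightarrow> ('a \<Rightarrow> 'a \<Rightarrow> real) \<Rightarrow> bool" where
  "cpd_kernel_on Y g \<longleftrightarrow> is_kernel_on Y g \<and>
     (\<forall>(n::nat) (ys::nat \<Rightarrow> 'a) (cs::nat \<Rightarrow> real).
        (\<forall>i<n. ys i \<in> Y) \<and> (\<Sum>i<n. cs i) = 0 \<longrightarrow>
        (\<Sum>i<n. \<Sum>j<n. cs i * cs j * g (ys i) (ys j)) \<ge> 0)"

definition relu :: "real \<Rightarrow> real" where
  "relu x = max 0 x"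

definition cube :: "real \<Rightarrow> (real^'p) set" where
  "cube M = {x. \<forall>i. \<bar>x $ i\<bar> \<le> M}"

text \<open>Shallow network x \<mapsto> A sigma(B x + c) with hidden width T and output dimension K
  (component k < K); matrices are given entrywise, rows of B as vectors.\<close>
definition fpsi :: "(real \<Rightarrow> real) \<Rightarrow> nat \<Rightarrow> (nat \<Rightarrow> nat \<Rightarrow> real) \<Rightarrow> (nat \<Rightarrow> real^'p)
    \<Rightarrow> (nat \<Rightarrow> real) \<Rightarrow> real^'p \<Rightarrow> nat \<Rightarrow> real" where
  "fpsi \<sigma> T A B c x k = (\<Sum>t<T. A k t * \<sigma> (B t \<bullet> x + c t))"

definition uxi :: "(real \<Rightarrow> real) \<Rightarrow> nat \<Rightarrow> (nat \<Rightarrow> real) \<Rightarrow> (nat \<Rightarrow> real^'p)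
    \<Rightarrow> (nat \<Rightarrow> real) \<Rightarrow> real^'p \<Rightarrow> real" where
  "uxi \<sigma> T' e F ob x = (\<Sum>t<T'. e t * \<sigma> (F t \<bullet> x + ob t))"

end

theory Submission
  imports Defs
begin

text \<open>
  Centring a conditionally positive definite kernel g at a base point yields a positive
  semidefinite matrix, so on finitely many points g (y i) (y j) = <a i, a j> + h i + h j.
  Interpolating this decomposition over a fine finite net of the compact cube with a partition
  of unity gives continuous features \<phi> and H such that g (f x) (f x') is uniformly close
  to <\<phi> x, \<phi> x'> + H x + H x'. Every feature is a uniform limit of shallow networks:
  for a bounded monotone sigmoid, staircases approximate continuous functions of one variable,
  hence ridge exponentials, hence by Stone-Weierstrass every continuous function; ReLU reduces
  to this case through the ramp relu u - relu (u - 1). The networks for the components of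
  \<phi> are finally stacked on one hidden layer, padded with zero weights.
\<close>

section \<open>Gram factorisation of positive semidefinite matrices\<close>

lemma quadratic_form_fun_upd_Suc:
  fixes P :: "nat \<Rightarrow> nat \<Rightarrow> real"
  assumes sym: "\<forall>i<Suc n. \<forall>j<Suc n. P i j = P j i"
  shows "(\<Sum>i<Suc n. \<Sum>j<Suc n. (c(n:=s)) i * (c(n:=s)) j * P i j)
       = (\<Sum>i<n. \<Sum>j<n. c i * c j * P i j) + 2 * s * (\<Sum>i<n. c i * P i n) + s\<^sup>2 * P n n"
proof -
  have row: "(\<Sum>j<n. s * c j * P n j) = s * (\<Sum>i<n. c i * P i n)"
    using sym by (auto simp: sum_distrib_left intro!: sum.cong)
  have column: "(\<Sum>i<n. c i * s * P i n) = s * (\<Sum>i<n. c i * P i n)"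
    by (auto simp: sum_distrib_left intro!: sum.cong)
  have "(\<Sum>i<Suc n. \<Sum>j<Suc n. (c(n:=s)) i * (c(n:=s)) j * P i j)
      = (\<Sum>i<n. \<Sum>j<n. c i * c j * P i j) + (\<Sum>i<n. c i * s * P i n)
        + ((\<Sum>j<n. s * c j * P n j) + s * s * P n n)"
    by (simp add: sum.distrib)
  then show ?thesis
    unfolding row column by (simp add: power2_eq_square)
qed

lemma psd_bordered_quadratic_form:
  fixes P :: "nat \<Rightarrow> nat \<Rightarrow> real"
  assumes sym: "\<forall>i<Suc n. \<forall>j<Suc n. P i j = P j i"
    and psd: "\<forall>c. 0 \<le> (\<Sum>i<Suc n. \<Sum>j<Suc n. c i * c j * P i j)"
  shows "0 \<le> (\<Sum>i<n. \<Sum>j<n. c i * c j * P i j) + 2 * s * (\<Sum>i<n. c i * P i n) + s\<^sup>2 * P n n"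
  using psd[rule_format, of "c(n:=s)"] by (simp only: quadratic_form_fun_upd_Suc[OF sym])

lemma psd_zero_pivot:
  fixes P :: "nat \<Rightarrow> nat \<Rightarrow> real"
  assumes sym: "\<forall>i<Suc n. \<forall>j<Suc n. P i j = P j i"
    and psd: "\<forall>c. 0 \<le> (\<Sum>i<Suc n. \<Sum>j<Suc n. c i * c j * P i j)"
    and "P n n = 0" and "i < n"
  shows "P i n = 0"
proof (rule ccontr)
  assume nonzero: "P i n \<noteq> 0"
  define c :: "nat \<Rightarrow> real" where "c k = (if k = i then 1 else 0)" for k
  define q where "q = (\<Sum>i<n. \<Sum>j<n. c i * c j * P i j)"
  have "(\<Sum>k<n. c k * P k n) = (\<Sum>k<n. if k = i then P k n else 0)"
    by (rule sum.cong) (auto simp: c_def)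
  then have "(\<Sum>k<n. c k * P k n) = P i n"
    using \<open>i < n\<close> by simp
  then have "0 \<le> q + 2 * s * P i n" for s
    using psd_bordered_quadratic_form[OF sym psd, of c s] \<open>P n n = 0\<close> by (simp add: q_def)
  from this[of "- (q + 1) / (2 * P i n)"] show False
    using nonzero by (simp add: field_simps)
qed

lemma psd_schur_complement:
  fixes P :: "nat \<Rightarrow> nat \<Rightarrow> real"
  assumes sym: "\<forall>i<Suc n. \<forall>j<Suc n. P i j = P j i"
    and psd: "\<forall>c. 0 \<le> (\<Sum>i<Suc n. \<Sum>j<Suc n. c i * c j * P i j)"
  shows "0 \<le> (\<Sum>i<n. \<Sum>j<n. c i * c j * (P i j - P i n * P j n / P n n))"
proof -
  define t where "t = (\<Sum>i<n. c i * P i n)"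
  define v where "v = P n n"
  have "(\<Sum>i<n. \<Sum>j<n. c i * c j * (P i j - P i n * P j n / v))
      = (\<Sum>i<n. \<Sum>j<n. c i * c j * P i j) - (\<Sum>i<n. \<Sum>j<n. (c i * P i n) * (c j * P j n) / v)"
    by (simp add: right_diff_distrib sum_subtractf mult.assoc mult.left_commute)
  also have "(\<Sum>i<n. \<Sum>j<n. (c i * P i n) * (c j * P j n) / v) = t\<^sup>2 / v"
    by (simp add: t_def power2_eq_square sum_divide_distrib[symmetric] sum_product)
  also have "0 \<le> (\<Sum>i<n. \<Sum>j<n. c i * c j * P i j) - t\<^sup>2 / v"
  proof (cases "v = 0")
    case True
    then show ?thesis using psd_bordered_quadratic_form[OF sym psd, of c 0] by simp
  next
    case False
    text \<open>Minimise the quadratic form over the last coefficient s, attained at s = -t/v.\<close>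
    have "0 \<le> (\<Sum>i<n. \<Sum>j<n. c i * c j * P i j) + 2 * (- t / v) * t + (- t / v)\<^sup>2 * v"
      using psd_bordered_quadratic_form[OF sym psd, of c "- t / v"] by (simp add: t_def v_def)
    moreover have "2 * (- t / v) * t + (- t / v)\<^sup>2 * v = - (t\<^sup>2 / v)"
      using False by (simp add: field_simps power2_eq_square)
    ultimately show ?thesis by simp
  qed
  finally show ?thesis by (simp add: v_def)
qed

lemma psd_gram_factorization:
  fixes P :: "nat \<Rightarrow> nat \<Rightarrow> real"
  assumes "\<forall>i<n. \<forall>j<n. P i j = P j i"
    and "\<forall>c. 0 \<le> (\<Sum>i<n. \<Sum>j<n. c i * c j * P i j)"
  shows "\<exists>a. \<forall>i<n. \<forall>j<n. P i j = (\<Sum>l<n. a l i * a l j)"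
  using assms
proof (induction n arbitrary: P)
  case 0
  then show ?case by simp
next
  case (Suc n)
  note sym = Suc.prems(1) and psd = Suc.prems(2)
  define v where "v = P n n"
  have v_nonneg: "0 \<le> v"
    using psd_bordered_quadratic_form[OF sym psd, of "\<lambda>_. 0" 1] by (simp add: v_def)
  text \<open>For v = 0 the complement is P itself, since division by 0 yields 0 in HOL.\<close>
  define P' where "P' i j = P i j - P i n * P j n / v" for i j
  have "\<forall>i<n. \<forall>j<n. P' i j = P' j i"
    using sym by (auto simp: P'_def)
  moreover have "\<forall>c. 0 \<le> (\<Sum>i<n. \<Sum>j<n. c i * c j * P' i j)"
    using psd_schur_complement[OF sym psd] by (simp add: P'_def v_def)
  ultimately obtain a where a: "\<forall>i<n. \<forall>j<n. P' i j = (\<Sum>l<n. a l i * a l j)"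
    using Suc.IH by blast
  have pivot_column: "P i n = 0" if "v = 0" "i < n" for i
    using psd_zero_pivot[OF sym psd] that by (simp add: v_def)
  text \<open>One Cholesky step: the new row of the factor is P i n / sqrt v, with sqrt v on the
    diagonal.\<close>
  define b where "b l i = (if l < n then (if i < n then a l i else 0)
                     else (if i < n then P i n / sqrt v else sqrt v))" for l i
  have "P i j = (\<Sum>l<Suc n. b l i * b l j)" if ij: "i < Suc n" "j < Suc n" for i j
  proof -
    consider "i < n" "j < n" | "i < n" "j = n" | "i = n" "j < n" | "i = n" "j = n"
      using ij by (metis less_SucE)
    then show ?thesis
    proof cases
      case 1
      then have "P i j = P' i j + P i n * P j n / v" by (simp add: P'_def)
      also have "\<dots> = (\<Sum>l<n. b l i * b l j) + b n i * b n j"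
        using 1 a v_nonneg
        by (cases "v = 0") (auto simp: b_def pivot_column field_simps intro!: sum.cong)
      finally show ?thesis by simp
    next
      case 2
      then show ?thesis
        using v_nonneg by (cases "v = 0") (auto simp: b_def pivot_column)
    next
      case 3
      then show ?thesis
        using v_nonneg sym by (cases "v = 0") (auto simp: b_def pivot_column)
    next
      case 4
      then show ?thesis using v_nonneg by (simp add: b_def v_def)
    qed
  qed
  then show ?case by blast
qed

section \<open>Conditionally positive definite kernels\<close>

lemma quadratic_form_centered:
  fixes G :: "nat \<Rightarrow> nat \<Rightarrow> real"
  assumes sym: "\<forall>i<n. \<forall>j<n. G i j = G j i"
  shows "(\<Sum>i<n. \<Sum>j<n. c i * c j * (G i j - G i 0 - G 0 j + G 0 0))
       = (\<Sum>i<n. \<Sum>j<n. c i * c j * G i j) + 2 * (- (\<Sum>i<n. c i)) * (\<Sum>i<n. c i * G i 0)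
         + (- (\<Sum>i<n. c i))\<^sup>2 * G 0 0"
proof -
  define S where "S = (\<Sum>i<n. c i)"
  have first_column: "(\<Sum>i<n. \<Sum>j<n. c i * c j * G i 0) = S * (\<Sum>i<n. c i * G i 0)"
    by (simp add: S_def sum_distrib_left sum_distrib_right mult_ac)
  have "(\<Sum>i<n. \<Sum>j<n. c i * c j * G 0 j) = (\<Sum>i<n. \<Sum>j<n. c i * (c j * G j 0))"
    using sym by (auto simp: mult_ac intro!: sum.cong)
  then have first_row: "(\<Sum>i<n. \<Sum>j<n. c i * c j * G 0 j) = S * (\<Sum>i<n. c i * G i 0)"
    by (simp add: S_def sum_product)
  have corner: "(\<Sum>i<n. \<Sum>j<n. c i * c j * G 0 0) = S\<^sup>2 * G 0 0"
    by (simp add: S_def power2_eq_square sum_distrib_left sum_distrib_right sum_product mult_ac)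
  have "(\<Sum>i<n. \<Sum>j<n. c i * c j * (G i j - G i 0 - G 0 j + G 0 0))
      = (\<Sum>i<n. \<Sum>j<n. c i * c j * G i j) - (\<Sum>i<n. \<Sum>j<n. c i * c j * G i 0)
        - (\<Sum>i<n. \<Sum>j<n. c i * c j * G 0 j) + (\<Sum>i<n. \<Sum>j<n. c i * c j * G 0 0)"
    by (simp add: algebra_simps sum.distrib sum_subtractf)
  then show ?thesis
    unfolding first_column first_row corner S_def[symmetric] by (simp add: algebra_simps)
qed

lemma cpd_kernel_onD:
  fixes n :: nat
  assumes "cpd_kernel_on Y g" and "\<forall>i<n. ys i \<in> Y" and "(\<Sum>i<n. cs i) = 0"
  shows "0 \<le> (\<Sum>i<n. \<Sum>j<n. cs i * cs j * g (ys i) (ys j))"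
proof -
  have "(\<forall>i<n. ys i \<in> Y) \<and> (\<Sum>i<n. cs i) = 0 \<longrightarrow>
      0 \<le> (\<Sum>i<n. \<Sum>j<n. cs i * cs j * g (ys i) (ys j))"
    using assms(1) unfolding cpd_kernel_on_def by blast
  with assms(2,3) show ?thesis by blast
qed

lemma cpd_kernel_gram_decomposition:
  fixes g :: "'a::topological_space \<Rightarrow> 'a \<Rightarrow> real" and n :: nat and ys :: "nat \<Rightarrow> 'a"
  assumes cpd: "cpd_kernel_on Y g" and ys: "\<forall>i<n. ys i \<in> Y"
  shows "\<exists>a h. \<forall>i<n. \<forall>j<n. g (ys i) (ys j) = (\<Sum>l<n. a l i * a l j) + h i + h j"
proof (cases "n = 0")
  case False
  have g_sym: "\<forall>y\<in>Y. \<forall>y'\<in>Y. g y y' = g y' y"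
    using cpd unfolding cpd_kernel_on_def is_kernel_on_def by blast
  define G where "G i j = g (ys i) (ys j)" for i j
  have G_sym: "\<forall>i<n. \<forall>j<n. G i j = G j i"
    using g_sym ys by (simp add: G_def)
  text \<open>Centring at ys 0 turns conditional positive definiteness into positive
    semidefiniteness: any coefficient vector c is completed to one with sum 0 by attaching
    the weight -(sum of c) to a copy of ys 0.\<close>
  define P where "P i j = G i j - G i 0 - G 0 j + G 0 0" for i j
  have "\<forall>i<n. \<forall>j<n. P i j = P j i"
    using G_sym False by (auto simp: P_def)
  moreover have "\<forall>c. 0 \<le> (\<Sum>i<n. \<Sum>j<n. c i * c j * P i j)"
  proof
    fix c :: "nat \<Rightarrow> real"
    define S where "S = (\<Sum>i<n. c i)"
    define zs where "zs = ys(n := ys 0)"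
    have zs: "\<forall>i<Suc n. zs i \<in> Y"
      using ys False by (auto simp: zs_def less_Suc_eq)
    have "0 \<le> (\<Sum>i<Suc n. \<Sum>j<Suc n. (c(n:=-S)) i * (c(n:=-S)) j * g (zs i) (zs j))"
      by (rule cpd_kernel_onD[OF cpd zs]) (simp add: S_def)
    also have "\<dots> = (\<Sum>i<n. \<Sum>j<n. c i * c j * g (zs i) (zs j))
        + 2 * (-S) * (\<Sum>i<n. c i * g (zs i) (zs n)) + (-S)\<^sup>2 * g (zs n) (zs n)"
      using zs g_sym by (intro quadratic_form_fun_upd_Suc) simp
    also have "\<dots> = (\<Sum>i<n. \<Sum>j<n. c i * c j * G i j)
        + 2 * (-S) * (\<Sum>i<n. c i * G i 0) + (-S)\<^sup>2 * G 0 0"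
      by (simp add: G_def zs_def)
    also have "\<dots> = (\<Sum>i<n. \<Sum>j<n. c i * c j * P i j)"
      unfolding P_def S_def by (rule quadratic_form_centered[OF G_sym, symmetric])
    finally show "0 \<le> (\<Sum>i<n. \<Sum>j<n. c i * c j * P i j)" .
  qed
  ultimately obtain a where a: "\<forall>i<n. \<forall>j<n. P i j = (\<Sum>l<n. a l i * a l j)"
    using psd_gram_factorization by blast
  define h where "h i = G i 0 - G 0 0 / 2" for i
  have "g (ys i) (ys j) = (\<Sum>l<n. a l i * a l j) + h i + h j" if "i < n" "j < n" for i j
  proof -
    have "P i j = (\<Sum>l<n. a l i * a l j)"
      using a that by blast
    moreover have "G 0 j = G j 0"
      using G_sym False that by auto
    ultimately show ?thesis
      by (simp add: P_def h_def G_def[symmetric])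
  qed
  then show ?thesis by blast
qed simp

section \<open>Continuous features of a kernel\<close>

lemma finite_partition_of_unity:
  fixes S :: "'a::metric_space set"
  assumes "compact S" and "r > 0"
  obtains n :: nat and z :: "nat \<Rightarrow> 'a" and \<psi> :: "nat \<Rightarrow> 'a \<Rightarrow> real"
  where "\<And>i. i < n \<Longrightarrow> z i \<in> S" and "\<And>i. continuous_on S (\<psi> i)" and "\<And>i x. 0 \<le> \<psi> i x"
    and "\<And>x. x \<in> S \<Longrightarrow> (\<Sum>i<n. \<psi> i x) = 1" and "\<And>i x. \<psi> i x \<noteq> 0 \<Longrightarrow> dist x (z i) < r"
proof -
  obtain k where k: "finite k" "k \<subseteq> S" "S \<subseteq> (\<Union>x\<in>k. ball x r)"
    using seq_compact_imp_totally_bounded[OF compact_imp_seq_compact[OF \<open>compact S\<close>],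
        rule_format, OF \<open>r > 0\<close>]
    by (elim exE conjE) auto
  obtain n z where k_enum: "k = z ` {i::nat. i < n}"
    using k(1) by (auto simp: finite_conv_nat_seg_image)
  have cover: "\<exists>i<n. dist x (z i) < r" if x: "x \<in> S" for x
  proof -
    obtain i where "i < n" "x \<in> ball (z i) r"
      using k(3) x by (auto simp: k_enum)
    then show ?thesis by (auto simp: dist_commute)
  qed
  define w where "w i x = max 0 (r - dist x (z i))" for i x
  define W where "W x = (\<Sum>i<n. w i x)" for x
  have w_nonneg: "0 \<le> w i x" for i x
    by (simp add: w_def)
  have W_pos: "0 < W x" if x: "x \<in> S" for x
  proof -
    obtain i where i: "i < n" "dist x (z i) < r"
      using cover[OF x] by blast
    then have "0 < w i x" by (simp add: w_def)
    also have "w i x \<le> W x"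
      unfolding W_def using i w_nonneg by (intro member_le_sum) auto
    finally show ?thesis .
  qed
  define \<psi> where "\<psi> i x = w i x / W x" for i x
  show ?thesis
  proof
    show "z i \<in> S" if "i < n" for i
      using k(2) that by (auto simp: k_enum)
    show "continuous_on S (\<psi> i)" for i
      unfolding \<psi>_def W_def w_def using W_pos
      by (intro continuous_intros) (force simp: W_def w_def)
    show "0 \<le> \<psi> i x" for i x
      using w_nonneg by (simp add: \<psi>_def W_def sum_nonneg)
    show "(\<Sum>i<n. \<psi> i x) = 1" if "x \<in> S" for x
      using W_pos[OF that] by (simp add: \<psi>_def sum_divide_distrib[symmetric] W_def)
    show "dist x (z i) < r" if "\<psi> i x \<noteq> 0" for i x
      using that by (auto simp: \<psi>_def w_def)
  qed
qed

lemma partition_of_unity_bivariate_approx: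
  fixes k :: "'a \<Rightarrow> 'a \<Rightarrow> real" and \<psi> :: "nat \<Rightarrow> 'a \<Rightarrow> real"
  assumes nonneg: "\<And>i x. 0 \<le> \<psi> i x"
    and sum_x: "(\<Sum>i<n. \<psi> i x) = 1" and sum_x': "(\<Sum>j<n. \<psi> j x') = 1"
    and close: "\<And>i j. i < n \<Longrightarrow> j < n \<Longrightarrow> \<psi> i x \<noteq> 0 \<Longrightarrow> \<psi> j x' \<noteq> 0 \<Longrightarrow>
                   \<bar>k x x' - k (z i) (z j)\<bar> \<le> \<epsilon>"
  shows "\<bar>k x x' - (\<Sum>i<n. \<Sum>j<n. \<psi> i x * \<psi> j x' * k (z i) (z j))\<bar> \<le> \<epsilon>"
proof -
  have weights: "(\<Sum>i<n. \<Sum>j<n. \<psi> i x * \<psi> j x' * c) = c" for c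
    using sum_x sum_x' by (simp flip: sum_distrib_left sum_distrib_right)
  have term_bound: "\<bar>\<psi> i x * \<psi> j x' * (k x x' - k (z i) (z j))\<bar> \<le> \<psi> i x * \<psi> j x' * \<epsilon>"
    if "i < n" "j < n" for i j
    using close[OF that] nonneg[of i x] nonneg[of j x']
    by (cases "\<psi> i x = 0 \<or> \<psi> j x' = 0") (auto simp: abs_mult mult_left_mono)
  have "k x x' - (\<Sum>i<n. \<Sum>j<n. \<psi> i x * \<psi> j x' * k (z i) (z j))
      = (\<Sum>i<n. \<Sum>j<n. \<psi> i x * \<psi> j x' * (k x x' - k (z i) (z j)))"
    by (simp add: weights right_diff_distrib sum_subtractf)
  also have "\<bar>\<dots>\<bar> \<le> (\<Sum>i<n. \<Sum>j<n. \<bar>\<psi> i x * \<psi> j x' * (k x x' - k (z i) (z j))\<bar>)"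
    by (rule order_trans[OF sum_abs sum_mono]) (rule sum_abs)
  also have "\<dots> \<le> (\<Sum>i<n. \<Sum>j<n. \<psi> i x * \<psi> j x' * \<epsilon>)"
    by (intro sum_mono term_bound) auto
  also have "\<dots> = \<epsilon>"
    by (rule weights)
  finally show ?thesis .
qed

lemma weighted_gram_decomposition:
  fixes k :: "nat \<Rightarrow> nat \<Rightarrow> real"
  assumes k: "\<forall>i<n. \<forall>j<n. k i j = (\<Sum>l<n. a l i * a l j) + h i + h j"
    and sum_u: "(\<Sum>i<n. u i) = 1" and sum_v: "(\<Sum>j<n. v j) = 1"
  shows "(\<Sum>i<n. \<Sum>j<n. u i * v j * k i j)
       = (\<Sum>l<n. (\<Sum>i<n. a l i * u i) * (\<Sum>j<n. a l j * v j))
         + (\<Sum>i<n. h i * u i) + (\<Sum>j<n. h j * v j)"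
proof -
  have "(\<Sum>i<n. \<Sum>j<n. u i * v j * k i j)
      = (\<Sum>i<n. \<Sum>j<n. u i * v j * (\<Sum>l<n. a l i * a l j))
        + (\<Sum>i<n. \<Sum>j<n. u i * v j * h i) + (\<Sum>i<n. \<Sum>j<n. u i * v j * h j)"
  proof -
    have "(\<Sum>i<n. \<Sum>j<n. u i * v j * k i j)
        = (\<Sum>i<n. \<Sum>j<n. u i * v j * (\<Sum>l<n. a l i * a l j) + u i * v j * h i + u i * v j * h j)"
      using k by (intro sum.cong refl) (simp add: distrib_left)
    then show ?thesis
      by (simp add: sum.distrib)
  qed
  also have "(\<Sum>i<n. \<Sum>j<n. u i * v j * (\<Sum>l<n. a l i * a l j))
      = (\<Sum>i<n. \<Sum>j<n. \<Sum>l<n. (a l i * u i) * (a l j * v j))"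
    by (simp add: sum_distrib_left mult_ac)
  also have "\<dots> = (\<Sum>i<n. \<Sum>l<n. \<Sum>j<n. (a l i * u i) * (a l j * v j))"
    by (intro sum.cong refl sum.swap)
  also have "\<dots> = (\<Sum>l<n. \<Sum>i<n. \<Sum>j<n. (a l i * u i) * (a l j * v j))"
    by (rule sum.swap)
  also have "\<dots> = (\<Sum>l<n. (\<Sum>i<n. a l i * u i) * (\<Sum>j<n. a l j * v j))"
    by (simp add: sum_product)
  also have "(\<Sum>i<n. \<Sum>j<n. u i * v j * h i) = (\<Sum>i<n. h i * u i) * (\<Sum>j<n. v j)"
    by (simp add: sum_distrib_left sum_distrib_right mult_ac)
  also have "(\<Sum>i<n. \<Sum>j<n. u i * v j * h j) = (\<Sum>i<n. u i) * (\<Sum>j<n. h j * v j)"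
    unfolding sum_product by (simp add: mult_ac)
  finally show ?thesis
    by (simp add: sum_u sum_v)
qed

lemma uniformly_continuous_on_kernel_pullback:
  fixes S :: "'b::metric_space set" and f :: "'b \<Rightarrow> 'a::topological_space"
    and g :: "'a \<Rightarrow> 'a \<Rightarrow> real"
  assumes g: "continuous_on (Y \<times> Y) (\<lambda>(y, y'). g y y')" and S: "compact S"
    and f: "continuous_on S f" and fY: "f ` S \<subseteq> Y"
  shows "uniformly_continuous_on (S \<times> S) (\<lambda>p. g (f (fst p)) (f (snd p)))"
proof -
  have "continuous_on (S \<times> S) (\<lambda>p. (f (fst p), f (snd p)))"
    by (intro continuous_intros continuous_on_compose2[OF f]) auto
  then have "continuous_on (S \<times> S) ((\<lambda>(y, y'). g y y') \<circ> (\<lambda>p. (f (fst p), f (snd p))))"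
    by (rule continuous_on_compose[OF _ continuous_on_subset[OF g]]) (use fY in auto)
  then show ?thesis
    using compact_Times[OF S S] by (simp add: compact_uniformly_continuous o_def)
qed

lemma cpd_kernel_feature_approx:
  fixes S :: "'b::metric_space set" and f :: "'b \<Rightarrow> 'a::topological_space"
    and g :: "'a \<Rightarrow> 'a \<Rightarrow> real"
  assumes cpd: "cpd_kernel_on Y g" and S: "compact S"
    and f: "continuous_on S f" and fY: "f ` S \<subseteq> Y" and "\<epsilon> > 0"
  shows "\<exists>(n::nat) \<phi> H. (\<forall>l<n. continuous_on S (\<phi> l)) \<and> continuous_on S H \<and>
           (\<forall>x\<in>S. \<forall>x'\<in>S. \<bar>g (f x) (f x') - ((\<Sum>l<n. \<phi> l x * \<phi> l x') + H x + H x')\<bar> \<le> \<epsilon>)"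
proof -
  define G where "G p = g (f (fst p)) (f (snd p))" for p :: "'b \<times> 'b"
  have "continuous_on (Y \<times> Y) (\<lambda>(y, y'). g y y')"
    using cpd unfolding cpd_kernel_on_def is_kernel_on_def by blast
  then have "uniformly_continuous_on (S \<times> S) G"
    unfolding G_def using S f fY by (rule uniformly_continuous_on_kernel_pullback)
  then obtain \<delta> where "\<delta> > 0" and \<delta>: "\<And>p p'. p \<in> S \<times> S \<Longrightarrow> p' \<in> S \<times> S \<Longrightarrow>
      dist p' p < \<delta> \<Longrightarrow> dist (G p') (G p) < \<epsilon>"
    unfolding uniformly_continuous_on_def using \<open>\<epsilon> > 0\<close> by metis
  have "\<delta> / 2 > 0"
    using \<open>\<delta> > 0\<close> by simp
  then show ?thesis
  proof (rule finite_partition_of_unity[OF S])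
    fix n :: nat and z :: "nat \<Rightarrow> 'b" and \<psi> :: "nat \<Rightarrow> 'b \<Rightarrow> real"
    assume z: "\<And>i. i < n \<Longrightarrow> z i \<in> S"
      and \<psi>_cont: "\<And>i. continuous_on S (\<psi> i)" and \<psi>_nonneg: "\<And>i x. 0 \<le> \<psi> i x"
      and \<psi>_sum: "\<And>x. x \<in> S \<Longrightarrow> (\<Sum>i<n. \<psi> i x) = 1"
      and \<psi>_local: "\<And>i x. \<psi> i x \<noteq> 0 \<Longrightarrow> dist x (z i) < \<delta> / 2"
    have fzY: "\<forall>i<n. f (z i) \<in> Y"
      using z fY by auto
    obtain a h where ah: "\<forall>i<n. \<forall>j<n. g (f (z i)) (f (z j)) = (\<Sum>l<n. a l i * a l j) + h i + h j"
      using cpd_kernel_gram_decomposition[OF cpd fzY] by blast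
    define \<phi> where "\<phi> l x = (\<Sum>i<n. a l i * \<psi> i x)" for l x
    define H where "H x = (\<Sum>i<n. h i * \<psi> i x)" for x
    have "\<bar>g (f x) (f x') - ((\<Sum>l<n. \<phi> l x * \<phi> l x') + H x + H x')\<bar> \<le> \<epsilon>"
      if x: "x \<in> S" and x': "x' \<in> S" for x x'
    proof -
      have "(\<Sum>i<n. \<Sum>j<n. \<psi> i x * \<psi> j x' * g (f (z i)) (f (z j)))
          = (\<Sum>l<n. \<phi> l x * \<phi> l x') + H x + H x'"
        unfolding \<phi>_def H_def by (rule weighted_gram_decomposition[OF ah \<psi>_sum[OF x] \<psi>_sum[OF x']])
      moreover have "\<bar>g (f x) (f x') - (\<Sum>i<n. \<Sum>j<n. \<psi> i x * \<psi> j x' * g (f (z i)) (f (z j)))\<bar> \<le> \<epsilon>"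
      proof (rule partition_of_unity_bivariate_approx[OF \<psi>_nonneg \<psi>_sum[OF x] \<psi>_sum[OF x']])
        fix i j assume ij: "i < n" "j < n" and "\<psi> i x \<noteq> 0" "\<psi> j x' \<noteq> 0"
        then have "dist (z i) x < \<delta> / 2" "dist (z j) x' < \<delta> / 2"
          using \<psi>_local by (auto simp: dist_commute)
        then have "dist (z i, z j) (x, x') < \<delta>"
          unfolding dist_Pair_Pair by (intro sqrt_sum_squares_half_less) auto
        then have "dist (G (z i, z j)) (G (x, x')) < \<epsilon>"
          using \<delta> x x' z ij by blast
        then show "\<bar>g (f x) (f x') - g (f (z i)) (f (z j))\<bar> \<le> \<epsilon>"
          by (simp add: G_def dist_real_def abs_minus_commute)
      qed
      ultimately show ?thesis by simp
    qed
    moreover have "\<forall>l<n. continuous_on S (\<phi> l)" and "continuous_on S H"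
      unfolding \<phi>_def H_def by (auto intro!: continuous_intros \<psi>_cont)
    ultimately show ?thesis by blast
  qed
qed

section \<open>Shallow networks\<close>

definition shallow_net :: "(real \<Rightarrow> real) \<Rightarrow> ('a::real_inner \<Rightarrow> real) \<Rightarrow> bool" where
  "shallow_net \<sigma> g \<longleftrightarrow> (\<exists>(T::nat) B c e. \<forall>x. g x = (\<Sum>t<T. e t * \<sigma> (B t \<bullet> x + c t)))"

definition net_approximable :: "(real \<Rightarrow> real) \<Rightarrow> 'a::real_inner set \<Rightarrow> ('a \<Rightarrow> real) \<Rightarrow> bool" where
  "net_approximable \<sigma> S f \<longleftrightarrow> (\<forall>\<epsilon>>0. \<exists>g. shallow_net \<sigma> g \<and> (\<forall>x\<in>S. \<bar>f x - g x\<bar> < \<epsilon>))"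

lemma sum_lessThan_add:
  fixes f :: "nat \<Rightarrow> 'a::comm_monoid_add"
  shows "(\<Sum>t<m + n. f t) = (\<Sum>t<m. f t) + (\<Sum>t<n. f (m + t))"
  by (induction n) (simp_all add: add.assoc)

lemma shallow_netI:
  assumes "\<And>x. g x = (\<Sum>t<(T::nat). e t * \<sigma> (B t \<bullet> x + c t))"
  shows "shallow_net \<sigma> g"
  using assms unfolding shallow_net_def by blast

lemma shallow_net_add:
  assumes "shallow_net \<sigma> f" and "shallow_net \<sigma> g"
  shows "shallow_net \<sigma> (\<lambda>x. f x + g x)"
proof -
  obtain T1 B1 c1 e1 where f: "\<And>x. f x = (\<Sum>t<(T1::nat). e1 t * \<sigma> (B1 t \<bullet> x + c1 t))"
    using assms(1) unfolding shallow_net_def by blast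
  obtain T2 B2 c2 e2 where g: "\<And>x. g x = (\<Sum>t<(T2::nat). e2 t * \<sigma> (B2 t \<bullet> x + c2 t))"
    using assms(2) unfolding shallow_net_def by blast
  define B where "B t = (if t < T1 then B1 t else B2 (t - T1))" for t
  define c where "c t = (if t < T1 then c1 t else c2 (t - T1))" for t
  define e where "e t = (if t < T1 then e1 t else e2 (t - T1))" for t
  show ?thesis
    by (rule shallow_netI[where T = "T1 + T2" and e = e and B = B and c = c])
      (simp add: sum_lessThan_add f g B_def c_def e_def)
qed

lemma shallow_net_cmult:
  assumes "shallow_net \<sigma> f"
  shows "shallow_net \<sigma> (\<lambda>x. a * f x)"
proof -
  obtain T B c e where f: "\<And>x. f x = (\<Sum>t<(T::nat). e t * \<sigma> (B t \<bullet> x + c t))"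
    using assms unfolding shallow_net_def by blast
  show ?thesis
    by (rule shallow_netI[where T = T and e = "\<lambda>t. a * e t" and B = B and c = c])
      (simp add: f sum_distrib_left mult.assoc)
qed

lemma shallow_net_const:
  assumes "\<sigma> \<beta> \<noteq> 0"
  shows "shallow_net \<sigma> (\<lambda>x::'a::real_inner. C)"
  by (rule shallow_netI[where T = 1 and e = "\<lambda>_. C / \<sigma> \<beta>" and B = "\<lambda>_. 0" and c = "\<lambda>_. \<beta>"])
    (simp add: assms)

lemma shallow_net_ridge:
  "shallow_net \<sigma> (\<lambda>x. \<Sum>k<(N::nat). e k * \<sigma> (\<alpha> k * (w \<bullet> x) + \<beta> k))"
  by (rule shallow_netI[where T = N and e = e and B = "\<lambda>k. \<alpha> k *\<^sub>R w" and c = \<beta>]) simp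

lemma shallow_net_shifted_difference:
  assumes "shallow_net (\<lambda>u. \<sigma> u - \<sigma> (u - a)) g"
  shows "shallow_net \<sigma> g"
proof -
  obtain T B c e where g: "\<And>x. g x =
      (\<Sum>t<(T::nat). e t * (\<sigma> (B t \<bullet> x + c t) - \<sigma> (B t \<bullet> x + c t - a)))"
    using assms unfolding shallow_net_def by blast
  have g_eq: "g = (\<lambda>x. (\<Sum>t<T. e t * \<sigma> (B t \<bullet> x + c t)) + (\<Sum>t<T. - e t * \<sigma> (B t \<bullet> x + (c t - a))))"
    unfolding g by (simp add: fun_eq_iff algebra_simps flip: sum.distrib)
  show ?thesis
    unfolding g_eq by (intro shallow_net_add; rule shallow_netI, rule refl)
qed

lemma net_approximable_add:
  assumes "net_approximable \<sigma> S f" and "net_approximable \<sigma> S g"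
  shows "net_approximable \<sigma> S (\<lambda>x. f x + g x)"
  unfolding net_approximable_def
proof (intro allI impI)
  fix \<epsilon> :: real assume "\<epsilon> > 0"
  then obtain f' g' where f': "shallow_net \<sigma> f'" "\<forall>x\<in>S. \<bar>f x - f' x\<bar> < \<epsilon> / 2"
    and g': "shallow_net \<sigma> g'" "\<forall>x\<in>S. \<bar>g x - g' x\<bar> < \<epsilon> / 2"
    using assms unfolding net_approximable_def by (meson half_gt_zero)
  have "\<forall>x\<in>S. \<bar>f x + g x - (f' x + g' x)\<bar> < \<epsilon>"
    using f'(2) g'(2) by (smt (verit) field_sum_of_halves)
  then show "\<exists>h. shallow_net \<sigma> h \<and> (\<forall>x\<in>S. \<bar>f x + g x - h x\<bar> < \<epsilon>)"
    using shallow_net_add[OF f'(1) g'(1)] by blast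
qed

lemma net_approximable_cmult:
  assumes "net_approximable \<sigma> S f"
  shows "net_approximable \<sigma> S (\<lambda>x. a * f x)"
  unfolding net_approximable_def
proof (intro allI impI)
  fix \<epsilon> :: real assume "\<epsilon> > 0"
  then obtain f' where f': "shallow_net \<sigma> f'" "\<forall>x\<in>S. \<bar>f x - f' x\<bar> < \<epsilon> / (\<bar>a\<bar> + 1)"
    using assms unfolding net_approximable_def
    by (meson divide_pos_pos zero_less_one add_nonneg_pos abs_ge_zero)
  have "\<bar>a * f x - a * f' x\<bar> < \<epsilon>" if "x \<in> S" for x
  proof -
    have "\<bar>a * f x - a * f' x\<bar> \<le> (\<bar>a\<bar> + 1) * \<bar>f x - f' x\<bar>"
      by (simp add: abs_mult mult_right_mono flip: right_diff_distrib)
    also have "\<dots> < (\<bar>a\<bar> + 1) * (\<epsilon> / (\<bar>a\<bar> + 1))"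
      using f'(2) that by (intro mult_strict_left_mono) auto
    finally show ?thesis by simp
  qed
  then show "\<exists>h. shallow_net \<sigma> h \<and> (\<forall>x\<in>S. \<bar>a * f x - h x\<bar> < \<epsilon>)"
    using shallow_net_cmult[OF f'(1)] by blast
qed

lemma net_approximable_uniform_limit:
  assumes "\<And>\<epsilon>. \<epsilon> > 0 \<Longrightarrow> \<exists>f'. net_approximable \<sigma> S f' \<and> (\<forall>x\<in>S. \<bar>f x - f' x\<bar> < \<epsilon>)"
  shows "net_approximable \<sigma> S f"
  unfolding net_approximable_def
proof (intro allI impI)
  fix \<epsilon> :: real assume "\<epsilon> > 0"
  then obtain f' where "net_approximable \<sigma> S f'" "\<forall>x\<in>S. \<bar>f x - f' x\<bar> < \<epsilon> / 2"
    using assms by (meson half_gt_zero)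
  moreover obtain g where "shallow_net \<sigma> g" "\<forall>x\<in>S. \<bar>f' x - g x\<bar> < \<epsilon> / 2"
    using calculation(1) \<open>\<epsilon> > 0\<close> unfolding net_approximable_def by (meson half_gt_zero)
  ultimately show "\<exists>g. shallow_net \<sigma> g \<and> (\<forall>x\<in>S. \<bar>f x - g x\<bar> < \<epsilon>)"
    by (intro exI[of _ g]) (smt (verit) field_sum_of_halves)
qed

lemma shallow_nets_common_hidden_layer:
  fixes g :: "nat \<Rightarrow> 'a::real_inner \<Rightarrow> real"
  assumes "\<forall>l<n. shallow_net \<sigma> (g l)"
  shows "\<exists>(T::nat) A B c. \<forall>l<n. \<forall>x. g l x = (\<Sum>t<T. A l t * \<sigma> (B t \<bullet> x + c t))"
  using assms
proof (induction n)
  case 0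
  then show ?case by simp
next
  case (Suc n)
  then obtain T :: nat and A B c where A: "\<forall>l<n. \<forall>x. g l x = (\<Sum>t<T. A l t * \<sigma> (B t \<bullet> x + c t))"
    by auto
  obtain T1 :: nat and B1 c1 e1 where g_n: "\<And>x. g n x = (\<Sum>t<T1. e1 t * \<sigma> (B1 t \<bullet> x + c1 t))"
    using Suc.prems unfolding shallow_net_def by blast
  define A' where
    "A' l t = (if t < T then (if l < n then A l t else 0) else (if l = n then e1 (t - T) else 0))"
    for l t
  define B' where "B' t = (if t < T then B t else B1 (t - T))" for t
  define c' where "c' t = (if t < T then c t else c1 (t - T))" for t
  have "g l x = (\<Sum>t<T + T1. A' l t * \<sigma> (B' t \<bullet> x + c' t))" if "l < Suc n" for l x
    using that A g_n by (auto simp: sum_lessThan_add A'_def B'_def c'_def less_Suc_eq)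
  then show ?case
    by blast
qed

lemma fpsi_padded_hidden_layer:
  fixes g :: "nat \<Rightarrow> real ^ 'p \<Rightarrow> real"
  assumes "\<forall>l<n. shallow_net \<sigma> (g l)"
  shows "\<exists>T0::nat. \<forall>T\<ge>T0. \<exists>A B c. \<forall>k x. fpsi \<sigma> T A B c x k = (if k < n then g k x else 0)"
proof -
  obtain T0 :: nat and A B c where A: "\<forall>l<n. \<forall>x. g l x = (\<Sum>t<T0. A l t * \<sigma> (B t \<bullet> x + c t))"
    using shallow_nets_common_hidden_layer[OF assms] by blast
  define A' where "A' l t = (if l < n \<and> t < T0 then A l t else 0)" for l t
  have "fpsi \<sigma> T A' B c x k = (if k < n then g k x else 0)" if "T0 \<le> T" for T k x
  proof -
    have "fpsi \<sigma> T A' B c x k = (\<Sum>t<T0. A' k t * \<sigma> (B t \<bullet> x + c t))"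
      unfolding fpsi_def using that by (intro sum.mono_neutral_right) (auto simp: A'_def)
    then show ?thesis
      using A by (simp add: A'_def)
  qed
  then show ?thesis
    by blast
qed

lemma uxi_shallow_net:
  fixes g :: "real ^ 'p \<Rightarrow> real"
  assumes "shallow_net \<sigma> g"
  shows "\<exists>T0::nat. \<forall>T\<ge>T0. \<exists>e F ob. \<forall>x. uxi \<sigma> T e F ob x = g x"
proof -
  obtain T0 :: nat where T0: "\<forall>T\<ge>T0. \<exists>A B c. \<forall>k x. fpsi \<sigma> T A B c x k = (if k < 1 then g x else 0)"
    using fpsi_padded_hidden_layer[of 1 \<sigma> "\<lambda>_. g"] assms by auto
  have "\<exists>e F ob. \<forall>x. uxi \<sigma> T e F ob x = g x" if T: "T0 \<le> T" for T
  proof -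
    obtain A B c where "\<forall>k x. fpsi \<sigma> T A B c x k = (if k < 1 then g x else 0)"
      using T0 T by blast
    then have "uxi \<sigma> T (A 0) B c x = g x" for x
      by (simp add: uxi_def fpsi_def)
    then show ?thesis
      by blast
  qed
  then show ?thesis
    by blast
qed

section \<open>Squashing functions\<close>

definition squashing :: "(real \<Rightarrow> real) \<Rightarrow> bool" where
  "squashing H \<longleftrightarrow> (\<forall>u. 0 \<le> H u \<and> H u \<le> 1) \<and> (H \<longlongrightarrow> 1) at_top \<and> (H \<longlongrightarrow> 0) at_bot"

lemma squashing_tails:
  assumes "squashing H" and "\<eta> > 0"
  obtains R where "R > 0" and "\<And>u. R \<le> u \<Longrightarrow> 1 - \<eta> \<le> H u" and "\<And>u. u \<le> - R \<Longrightarrow> H u \<le> \<eta>"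
proof -
  have "eventually (\<lambda>u. dist (H u) 1 < \<eta>) at_top" and "eventually (\<lambda>u. dist (H u) 0 < \<eta>) at_bot"
    using assms unfolding squashing_def tendsto_iff by auto
  then obtain R1 R0 where R1: "\<And>u. R1 \<le> u \<Longrightarrow> dist (H u) 1 < \<eta>"
    and R0: "\<And>u. u \<le> R0 \<Longrightarrow> dist (H u) 0 < \<eta>"
    unfolding eventually_at_top_linorder eventually_at_bot_linorder by blast
  define R where "R = max 1 (max R1 (- R0))"
  have R: "1 \<le> R" "R1 \<le> R" "- R0 \<le> R"
    by (simp_all add: R_def)
  show ?thesis
  proof (rule that[of R])
    show "1 - \<eta> \<le> H u" if "R \<le> u" for u
      using R1[of u] R that by (simp add: dist_real_def)
    show "H u \<le> \<eta>" if "u \<le> - R" for u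
      using R0[of u] R that by (simp add: dist_real_def abs_less_iff)
  qed (use R in simp)
qed

lemma squashed_sum_step_error:
  fixes D u :: "nat \<Rightarrow> real" and H :: "real \<Rightarrow> real"
  assumes H01: "\<And>v. 0 \<le> H v \<and> H v \<le> 1" and "m \<le> N"
    and high: "\<And>k. k \<le> m \<Longrightarrow> 1 - \<eta> \<le> H (u k)"
    and low: "\<And>k. Suc m < k \<Longrightarrow> H (u k) \<le> \<eta>"
    and jump: "\<bar>D (Suc m)\<bar> \<le> \<rho>"
  shows "\<bar>(\<Sum>k\<le>N. D k * H (u k)) - (\<Sum>k\<le>m. D k)\<bar> \<le> \<eta> * (\<Sum>k\<le>N. \<bar>D k\<bar>) + \<rho>"
proof -
  have "0 \<le> \<eta>"
    using high[of 0] H01[of "u 0"] by linarith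
  define err where "err k = D k * (H (u k) - (if k \<le> m then 1 else 0))" for k
  have err_bound: "\<bar>err k\<bar> \<le> \<eta> * \<bar>D k\<bar> + (if k = Suc m then \<rho> else 0)" for k
  proof -
    consider "k \<le> m" | "k = Suc m" | "Suc m < k" by linarith
    then show ?thesis
    proof cases
      case 1
      then have "\<bar>H (u k) - 1\<bar> \<le> \<eta>"
        using high[of k] H01[of "u k"] by (simp add: abs_le_iff)
      then have "\<bar>D k\<bar> * \<bar>H (u k) - 1\<bar> \<le> \<bar>D k\<bar> * \<eta>"
        by (simp add: mult_left_mono)
      then show ?thesis
        using 1 by (simp add: err_def abs_mult mult.commute)
    next
      case 2
      then have "\<bar>err k\<bar> \<le> \<bar>D k\<bar>"
        using H01 by (simp add: err_def abs_mult mult_left_le)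
      then show ?thesis
        using 2 jump \<open>0 \<le> \<eta>\<close> by (simp add: add_increasing)
    next
      case 3
      then have "\<bar>D k\<bar> * H (u k) \<le> \<bar>D k\<bar> * \<eta>"
        using low by (simp add: mult_left_mono)
      then show ?thesis
        using 3 H01[of "u k"] by (simp add: err_def abs_mult mult.commute)
    qed
  qed
  have "(\<Sum>k\<le>N. D k * H (u k)) - (\<Sum>k\<le>m. D k) = (\<Sum>k\<le>N. err k)"
  proof -
    have "(\<Sum>k\<le>N. if k \<le> m then D k else 0) = (\<Sum>k\<le>m. D k)"
      using \<open>m \<le> N\<close> by (intro sum.mono_neutral_cong_right) auto
    moreover have "err k = D k * H (u k) - (if k \<le> m then D k else 0)" for k
      by (simp add: err_def algebra_simps)
    ultimately show ?thesis
      by (simp add: sum_subtractf)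
  qed
  also have "\<bar>\<dots>\<bar> \<le> (\<Sum>k\<le>N. \<eta> * \<bar>D k\<bar> + (if k = Suc m then \<rho> else 0))"
    by (rule order_trans[OF sum_abs sum_mono]) (rule err_bound)
  also have "\<dots> \<le> \<eta> * (\<Sum>k\<le>N. \<bar>D k\<bar>) + \<rho>"
  proof -
    have "0 \<le> \<rho>"
      using jump abs_ge_zero order_trans by blast
    then show ?thesis
      by (simp add: sum.distrib sum_distrib_left)
  qed
  finally show ?thesis .
qed

lemma grid_cell:
  fixes a d t :: real
  assumes "0 < d" and "a \<le> t" and "t \<le> a + real N * d"
  obtains m where "m \<le> N" and "a + real m * d \<le> t" and "t < a + real m * d + d"
proof (cases "t < a + real N * d")
  case True
  define m where "m = nat \<lfloor>(t - a) / d\<rfloor>"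
  have q: "0 \<le> (t - a) / d" "(t - a) / d < real N"
    using assms True by (simp_all add: field_simps)
  then have "real m \<le> (t - a) / d" "(t - a) / d < real m + 1"
    by (simp_all add: m_def)
  moreover have "m \<le> N"
    using q by (simp add: m_def nat_le_iff floor_le_iff)
  ultimately show ?thesis
    using \<open>0 < d\<close> by (intro that[of m]) (simp_all add: field_simps)
next
  case False
  then show ?thesis
    using assms by (intro that[of N]) simp_all
qed

lemma uniform_grid:
  fixes h :: "real \<Rightarrow> real"
  assumes "continuous_on {a..b} h" and "a < b" and "e > 0"
  obtains N :: nat and d where "N \<ge> 1" and "d > 0" and "a + real N * d = b"
    and "\<forall>s\<in>{a..b}. \<forall>t\<in>{a..b}. \<bar>s - t\<bar> \<le> d \<longrightarrow> \<bar>h s - h t\<bar> < e"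
proof -
  have "uniformly_continuous_on {a..b} h"
    using assms(1) by (simp add: compact_uniformly_continuous)
  then obtain \<delta> where "\<delta> > 0" and \<delta>: "\<forall>s\<in>{a..b}. \<forall>t\<in>{a..b}. \<bar>s - t\<bar> < \<delta> \<longrightarrow> \<bar>h s - h t\<bar> < e"
    unfolding uniformly_continuous_on_def dist_real_def using \<open>e > 0\<close> by metis
  define N where "N = nat \<lceil>(b - a) / \<delta>\<rceil> + 1"
  have "N \<ge> 1" and "(b - a) / \<delta> < N"
    unfolding N_def by linarith+
  then have "(b - a) / N < \<delta>"
    using \<open>\<delta> > 0\<close> by (simp add: field_simps)
  then show ?thesis
    using \<open>N \<ge> 1\<close> \<open>a < b\<close> \<delta> by (intro that[of N "(b - a) / N"]) auto
qed

lemma grid_step_offsets: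
  fixes a d t R :: real
  assumes "d > 0" and "R > 0" and m: "a + real m * d \<le> t" "t < a + real m * d + d"
  shows "k \<le> m \<Longrightarrow> R \<le> 2 * R / d * (t - (a + real k * d - d / 2))"
    and "Suc m < k \<Longrightarrow> 2 * R / d * (t - (a + real k * d - d / 2)) \<le> - R"
proof -
  have half_step: "2 * R / d * (d / 2) = R"
    using \<open>d > 0\<close> by simp
  have "0 < 2 * R / d"
    using assms by simp
  show "R \<le> 2 * R / d * (t - (a + real k * d - d / 2))" if "k \<le> m"
  proof -
    have "real k * d \<le> real m * d"
      using that \<open>d > 0\<close> by (intro mult_right_mono) auto
    then have "d / 2 \<le> t - (a + real k * d - d / 2)"
      using m by linarith
    then show ?thesis
      using half_step \<open>0 < 2 * R / d\<close> by (metis mult_left_mono less_imp_le)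
  qed
  show "2 * R / d * (t - (a + real k * d - d / 2)) \<le> - R" if "Suc m < k"
  proof -
    have "real (Suc (Suc m)) * d \<le> real k * d"
      using that \<open>d > 0\<close> by (intro mult_right_mono) auto
    then have "t - (a + real k * d - d / 2) \<le> - (d / 2)"
      using m by (simp add: algebra_simps)
    then show ?thesis
      using half_step \<open>0 < 2 * R / d\<close> by (metis mult_left_mono mult_minus_right less_imp_le)
  qed
qed

lemma squashing_staircase_approx:
  assumes H: "squashing H" and h: "continuous_on {a..b} h" and "a < b" and "\<epsilon> > 0"
  shows "\<exists>(N::nat) \<kappa> c D. \<forall>t\<in>{a..b}. \<bar>h t - (\<Sum>k<N. D k * H (\<kappa> * (t - c k)))\<bar> < \<epsilon>"
proof -
  obtain N :: nat and d where "N \<ge> 1" and "d > 0" and grid_end: "a + real N * d = b"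
    and close: "\<forall>s\<in>{a..b}. \<forall>t\<in>{a..b}. \<bar>s - t\<bar> \<le> d \<longrightarrow> \<bar>h s - h t\<bar> < \<epsilon> / 4"
    using uniform_grid[OF h \<open>a < b\<close>, of "\<epsilon> / 4"] \<open>\<epsilon> > 0\<close> by auto
  define tk where "tk k = a + real k * d" for k
  have tk_mem: "tk k \<in> {a..b}" if "k \<le> N" for k
    using that \<open>d > 0\<close> grid_end by (auto simp: tk_def intro: mult_right_mono)
  define D where "D k = (if k = 0 then h a else if k \<le> N then h (tk k) - h (tk (k - 1)) else 0)"
    for k
  have jump: "\<bar>D (Suc k)\<bar> \<le> \<epsilon> / 4" for k
  proof (cases "Suc k \<le> N")
    case True
    then have "\<bar>h (tk (Suc k)) - h (tk k)\<bar> < \<epsilon> / 4"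
      using close tk_mem[of k] tk_mem[of "Suc k"] \<open>d > 0\<close> by (simp add: tk_def algebra_simps)
    then show ?thesis
      using True by (simp add: D_def)
  qed (use \<open>\<epsilon> > 0\<close> in \<open>simp add: D_def\<close>)
  have telescope: "(\<Sum>k\<le>m. D k) = h (tk m)" if "m \<le> N" for m
    using that by (induction m) (auto simp: D_def tk_def)
  define total_variation where "total_variation = (\<Sum>k\<le>N. \<bar>D k\<bar>)"
  define \<eta> where "\<eta> = \<epsilon> / (4 * (total_variation + 1))"
  have "0 \<le> total_variation"
    by (simp add: total_variation_def sum_nonneg)
  then have "\<eta> > 0" and "\<eta> * (total_variation + 1) = \<epsilon> / 4"
    using \<open>\<epsilon> > 0\<close> by (simp_all add: \<eta>_def field_simps)
  then have \<eta>_small: "\<eta> * total_variation < \<epsilon> / 4"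
    by (simp add: distrib_left)
  obtain R where "R > 0" and R_high: "\<And>u. R \<le> u \<Longrightarrow> 1 - \<eta> \<le> H u"
    and R_low: "\<And>u. u \<le> - R \<Longrightarrow> H u \<le> \<eta>"
    using squashing_tails[OF H \<open>\<eta> > 0\<close>] by blast
  have H01: "0 \<le> H v \<and> H v \<le> 1" for v
    using H unfolding squashing_def by blast
  text \<open>The k-th step of the staircase sits midway between the grid points tk (k - 1) and tk k,
    so at any t every step but one is evaluated where H is within \<eta> of 0 or 1.\<close>
  define \<kappa> where "\<kappa> = 2 * R / d"
  define c where "c k = tk k - d / 2" for k
  have "\<bar>h t - (\<Sum>k<Suc N. D k * H (\<kappa> * (t - c k)))\<bar> < \<epsilon>" if t: "t \<in> {a..b}" for t
  proof -
    obtain m where "m \<le> N" and m: "a + real m * d \<le> t" "t < a + real m * d + d"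
      using grid_cell[OF \<open>d > 0\<close>, of a t N] t grid_end by auto
    have high: "1 - \<eta> \<le> H (\<kappa> * (t - c k))" if "k \<le> m" for k
      using R_high grid_step_offsets(1)[OF \<open>d > 0\<close> \<open>R > 0\<close> m that] by (simp add: \<kappa>_def c_def tk_def)
    have low: "H (\<kappa> * (t - c k)) \<le> \<eta>" if "Suc m < k" for k
      using R_low grid_step_offsets(2)[OF \<open>d > 0\<close> \<open>R > 0\<close> m that] by (simp add: \<kappa>_def c_def tk_def)
    have "\<bar>(\<Sum>k\<le>N. D k * H (\<kappa> * (t - c k))) - h (tk m)\<bar> \<le> \<eta> * total_variation + \<epsilon> / 4"
      using squashed_sum_step_error[where H = H and D = D and u = "\<lambda>k. \<kappa> * (t - c k)",
          OF H01 \<open>m \<le> N\<close> high low jump]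
        telescope[OF \<open>m \<le> N\<close>]
      by (simp add: total_variation_def)
    moreover have "\<bar>h t - h (tk m)\<bar> < \<epsilon> / 4"
      using close t tk_mem[OF \<open>m \<le> N\<close>] m by (simp add: tk_def)
    ultimately show ?thesis
      unfolding lessThan_Suc_atMost using \<eta>_small by linarith
  qed
  then show ?thesis
    by blast
qed

lemma bounded_mono_squashing:
  fixes s :: "real \<Rightarrow> real"
  assumes bnd: "bounded (range s)" and "mono s" and nonconst: "\<not> (\<exists>a. \<forall>x. s x = a)"
  obtains L U where "L < U" and "squashing (\<lambda>u. (s u - L) / (U - L))"
proof -
  define L where "L = Inf (range s)"
  define U where "U = Sup (range s)"
  have "bdd_above (range s)" and "bdd_below (range s)"
    using bnd by (auto intro: bounded_imp_bdd_above bounded_imp_bdd_below)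
  then have L: "L \<le> s x" and U: "s x \<le> U" for x
    by (auto simp: L_def U_def intro: cInf_lower cSup_upper)
  obtain x y where "s x \<noteq> s y"
    using nonconst by metis
  then have "L < U"
    using L[of x] U[of x] L[of y] U[of y] by linarith
  have lim_top: "(s \<longlongrightarrow> U) at_top"
  proof (rule increasing_tendsto)
    fix v assume "v < U"
    then obtain x1 where "v < s x1"
      using less_cSupD[of "range s"] by (auto simp: U_def)
    then show "eventually (\<lambda>u. v < s u) at_top"
      using \<open>mono s\<close> unfolding eventually_at_top_linorder
      by (meson monoD order_less_le_trans)
  qed (simp add: U)
  have lim_bot: "(s \<longlongrightarrow> L) at_bot"
  proof (rule decreasing_tendsto)
    fix v assume "L < v"
    then obtain x0 where "s x0 < v"
      using cInf_lessD[of "range s"] by (auto simp: L_def)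
    then show "eventually (\<lambda>u. s u < v) at_bot"
      using \<open>mono s\<close> unfolding eventually_at_bot_linorder
      by (meson monoD order_le_less_trans)
  qed (simp add: L)
  have "((\<lambda>u. (s u - L) / (U - L)) \<longlongrightarrow> (U - L) / (U - L)) at_top"
    using \<open>L < U\<close> by (intro tendsto_divide tendsto_diff lim_top tendsto_const) simp
  moreover have "((\<lambda>u. (s u - L) / (U - L)) \<longlongrightarrow> (L - L) / (U - L)) at_bot"
    using \<open>L < U\<close> by (intro tendsto_divide tendsto_diff lim_bot tendsto_const) simp
  moreover have "0 \<le> (s u - L) / (U - L) \<and> (s u - L) / (U - L) \<le> 1" for u
    using \<open>L < U\<close> L[of u] U[of u] by (simp add: field_simps)
  ultimately show ?thesis
    using \<open>L < U\<close> by (intro that[of L U]) (simp_all add: squashing_def)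
qed

lemma sigmoid_net_approximable_ridge:
  fixes s :: "real \<Rightarrow> real" and S :: "'a::real_inner set"
  assumes bnd: "bounded (range s)" and mono: "mono s" and nonconst: "\<not> (\<exists>a. \<forall>x. s x = a)"
    and "bounded S" and h: "continuous_on UNIV h"
  shows "net_approximable s S (\<lambda>x. h (w \<bullet> x))"
  unfolding net_approximable_def
proof (intro allI impI)
  fix \<epsilon> :: real assume "\<epsilon> > 0"
  obtain R where "R > 0" and R: "\<And>x. x \<in> S \<Longrightarrow> w \<bullet> x \<in> {-R..R}"
  proof -
    obtain R0 where R0: "\<And>x. x \<in> S \<Longrightarrow> norm x \<le> R0"
      using \<open>bounded S\<close> unfolding bounded_iff by blast
    define R where "R = norm w * \<bar>R0\<bar> + 1"
    have "w \<bullet> x \<in> {-R..R}" if "x \<in> S" for x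
    proof -
      have "\<bar>w \<bullet> x\<bar> \<le> R"
        using Cauchy_Schwarz_ineq2[of w x] R0[OF that] unfolding R_def
        by (smt (verit) mult_left_mono norm_ge_zero)
      then show ?thesis
        by (simp add: abs_le_iff)
    qed
    moreover have "0 < R"
      by (simp add: R_def add_nonneg_pos)
    ultimately show ?thesis
      using that by blast
  qed
  obtain L U where "L < U" and H: "squashing (\<lambda>u. (s u - L) / (U - L))"
    using bounded_mono_squashing[OF bnd mono nonconst] by blast
  have "- R < R"
    using \<open>R > 0\<close> by simp
  from squashing_staircase_approx[OF H continuous_on_subset[OF h subset_UNIV] this \<open>\<epsilon> > 0\<close>]
  obtain N :: nat and \<kappa> c D where staircase: "\<forall>t\<in>{-R..R}.
      \<bar>h t - (\<Sum>k<N. D k * ((s (\<kappa> * (t - c k)) - L) / (U - L)))\<bar> < \<epsilon>"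
    by blast
  define g where "g x = (\<Sum>k<N. D k * ((s (\<kappa> * (w \<bullet> x - c k)) - L) / (U - L)))" for x
  obtain \<beta> where "s \<beta> \<noteq> 0"
    using nonconst by metis
  have g_eq: "g = (\<lambda>x. (\<Sum>k<N. D k / (U - L) * s (\<kappa> * (w \<bullet> x) + - \<kappa> * c k))
              + - (L / (U - L) * (\<Sum>k<N. D k)))"
    by (simp add: fun_eq_iff g_def sum_distrib_left diff_divide_distrib right_diff_distrib
        sum_subtractf sum_divide_distrib algebra_simps)
  have "shallow_net s g"
    unfolding g_eq
    by (intro shallow_net_add shallow_net_ridge shallow_net_const[where \<sigma> = s, OF \<open>s \<beta> \<noteq> 0\<close>])
  moreover have "\<forall>x\<in>S. \<bar>h (w \<bullet> x) - g x\<bar> < \<epsilon>"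
    using staircase R by (simp add: g_def)
  ultimately show "\<exists>g. shallow_net s g \<and> (\<forall>x\<in>S. \<bar>h (w \<bullet> x) - g x\<bar> < \<epsilon>)"
    by blast
qed

section \<open>Universal approximation\<close>

inductive_set exp_sums :: "('a::real_inner \<Rightarrow> real) set" where
  exp_sums_exp: "(\<lambda>x. a * exp (w \<bullet> x)) \<in> exp_sums"
| exp_sums_add: "f \<in> exp_sums \<Longrightarrow> g \<in> exp_sums \<Longrightarrow> (\<lambda>x. f x + g x) \<in> exp_sums"

lemma exp_sums_mult:
  assumes "f \<in> exp_sums" and "g \<in> exp_sums"
  shows "(\<lambda>x. f x * g x) \<in> exp_sums"
  using assms
proof (induction f rule: exp_sums.induct)
  case (exp_sums_exp a w)
  from exp_sums_exp.prems show ?case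
  proof (induction g rule: exp_sums.induct)
    case (exp_sums_exp b v)
    have "(\<lambda>x. a * exp (w \<bullet> x) * (b * exp (v \<bullet> x))) = (\<lambda>x. (a * b) * exp ((w + v) \<bullet> x))"
      by (simp add: fun_eq_iff inner_add_left exp_add)
    then show ?case
      by (simp add: exp_sums.exp_sums_exp)
  next
    case (exp_sums_add g1 g2)
    then show ?case
      using exp_sums.exp_sums_add by (fastforce simp: distrib_left)
  qed
next
  case (exp_sums_add f1 f2)
  then show ?case
    using exp_sums.exp_sums_add by (fastforce simp: distrib_right)
qed

lemma exp_sums_continuous_on: "f \<in> exp_sums \<Longrightarrow> continuous_on S f"
  by (induction f rule: exp_sums.induct) (auto intro!: continuous_intros)

lemma sigmoid_net_approximable_exp_sums:
  fixes s :: "real \<Rightarrow> real"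
  assumes "bounded (range s)" and "mono s" and "\<not> (\<exists>a. \<forall>x. s x = a)" and "bounded S"
  shows "f \<in> exp_sums \<Longrightarrow> net_approximable s S f"
proof (induction f rule: exp_sums.induct)
  case (exp_sums_exp a w)
  show ?case
    using sigmoid_net_approximable_ridge[OF assms continuous_on_exp[OF continuous_on_id]]
    by (rule net_approximable_cmult)
next
  case (exp_sums_add f g)
  from exp_sums_add.IH show ?case
    by (rule net_approximable_add)
qed

lemma sigmoid_net_approximable:
  fixes s :: "real \<Rightarrow> real" and S :: "'a::real_inner set"
  assumes s: "bounded (range s)" "mono s" "\<not> (\<exists>a. \<forall>x. s x = a)"
    and "compact S" and f: "continuous_on S f"
  shows "net_approximable s S f"
proof -
  interpret function_ring_on exp_sums S
  proof
    show "compact S" by fact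
    show "continuous_on S f" if "f \<in> exp_sums" for f
      using that by (rule exp_sums_continuous_on)
    show "(\<lambda>x. f x + g x) \<in> exp_sums" if "f \<in> exp_sums" "g \<in> exp_sums" for f g
      using that by (rule exp_sums_add)
    show "(\<lambda>x. f x * g x) \<in> exp_sums" if "f \<in> exp_sums" "g \<in> exp_sums" for f g
      using that by (rule exp_sums_mult)
    show "(\<lambda>_. c) \<in> exp_sums" for c
      using exp_sums_exp[of c 0] by simp
    show "\<exists>f\<in>exp_sums. f x \<noteq> f y" if "x \<noteq> y" for x y :: 'a
    proof
      have "0 < (x - y) \<bullet> (x - y)"
        using that by simp
      then have "(x - y) \<bullet> y < (x - y) \<bullet> x"
        by (simp add: inner_diff_right)
      then show "exp ((x - y) \<bullet> x) \<noteq> exp ((x - y) \<bullet> y)"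
        by simp
    qed (rule exp_sums_exp[of 1, simplified])
  qed
  show ?thesis
  proof (rule net_approximable_uniform_limit)
    fix \<epsilon> :: real assume "\<epsilon> > 0"
    then obtain g where "g \<in> exp_sums" and "\<forall>x\<in>S. \<bar>f x - g x\<bar> < \<epsilon>"
      using Stone_Weierstrass_basic[OF f] by blast
    moreover have "net_approximable s S g"
      using \<open>g \<in> exp_sums\<close>
      by (rule sigmoid_net_approximable_exp_sums[OF s compact_imp_bounded[OF \<open>compact S\<close>]])
    ultimately show "\<exists>f'. net_approximable s S f' \<and> (\<forall>x\<in>S. \<bar>f x - f' x\<bar> < \<epsilon>)"
      by blast
  qed
qed

lemma relu_net_approximable:
  fixes S :: "'a::real_inner set"
  assumes "compact S" and "continuous_on S f"
  shows "net_approximable relu S f"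
proof -
  define ramp where "ramp u = relu u - relu (u - 1)" for u
  have "ramp u \<in> {0..1}" for u
    by (auto simp: ramp_def relu_def)
  then have "bounded (range ramp)"
    by (intro bounded_subset[OF bounded_cbox[of 0 1]]) auto
  moreover have "mono ramp"
    by (auto simp: mono_def ramp_def relu_def)
  moreover have "ramp 0 \<noteq> ramp 1"
    by (simp add: ramp_def relu_def)
  then have "\<not> (\<exists>a. \<forall>x. ramp x = a)"
    by metis
  ultimately have "net_approximable ramp S f"
    using sigmoid_net_approximable assms by blast
  then show ?thesis
    unfolding net_approximable_def ramp_def using shallow_net_shifted_difference by blast
qed

section \<open>Network approximation of the kernel\<close>

lemma gram_sum_perturbation:
  fixes u v u' v' :: "nat \<Rightarrow> real"
  assumes close: "\<And>l. l < n \<Longrightarrow> \<bar>u' l - u l\<bar> \<le> \<eta> \<and> \<bar>v' l - v l\<bar> \<le> \<eta>"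
    and bounded: "\<And>l. l < n \<Longrightarrow> \<bar>u l\<bar> \<le> B \<and> \<bar>v l\<bar> \<le> B" and "\<eta> \<le> 1"
  shows "\<bar>(\<Sum>l<n. u' l * v' l) - (\<Sum>l<n. u l * v l)\<bar> \<le> n * (\<eta> * (2 * B + 1))"
proof -
  have "\<bar>u' l * v' l - u l * v l\<bar> \<le> \<eta> * (2 * B + 1)" if "l < n" for l
  proof -
    have "u' l * v' l - u l * v l = (u' l - u l) * v' l + u l * (v' l - v l)"
      by (simp add: algebra_simps)
    then have "\<bar>u' l * v' l - u l * v l\<bar> \<le> \<bar>u' l - u l\<bar> * \<bar>v' l\<bar> + \<bar>u l\<bar> * \<bar>v' l - v l\<bar>"
      by (metis abs_mult abs_triangle_ineq)
    also have "\<dots> \<le> \<eta> * (B + 1) + B * \<eta>"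
      using close[OF that] bounded[OF that] \<open>\<eta> \<le> 1\<close>
      by (intro add_mono mult_mono) auto
    finally show ?thesis
      by (simp add: algebra_simps)
  qed
  then have "(\<Sum>l<n. \<bar>u' l * v' l - u l * v l\<bar>) \<le> (\<Sum>l<n. \<eta> * (2 * B + 1))"
    by (intro sum_mono) simp
  moreover have "\<bar>(\<Sum>l<n. u' l * v' l) - (\<Sum>l<n. u l * v l)\<bar> \<le> (\<Sum>l<n. \<bar>u' l * v' l - u l * v l\<bar>)"
    unfolding sum_subtractf[symmetric] by (rule sum_abs)
  ultimately show ?thesis
    by simp
qed

lemma compact_continuous_family_bound:
  fixes \<phi> :: "nat \<Rightarrow> 'a::topological_space \<Rightarrow> real"
  assumes "compact S" and "\<forall>l<n. continuous_on S (\<phi> l)"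
  shows "\<exists>B\<ge>0. \<forall>l<n. \<forall>x\<in>S. \<bar>\<phi> l x\<bar> \<le> B"
proof -
  have "bounded ((\<lambda>x. \<Sum>l<n. \<bar>\<phi> l x\<bar>) ` S)"
    using assms by (intro compact_imp_bounded compact_continuous_image continuous_intros) auto
  then obtain B where B: "\<And>x. x \<in> S \<Longrightarrow> (\<Sum>l<n. \<bar>\<phi> l x\<bar>) \<le> B"
    unfolding bounded_iff by fastforce
  have "\<bar>\<phi> l x\<bar> \<le> \<bar>B\<bar>" if "l < n" "x \<in> S" for l x
    using member_le_sum[of l "{..<n}" "\<lambda>l. \<bar>\<phi> l x\<bar>"] B[OF \<open>x \<in> S\<close>] that by fastforce
  then show ?thesis
    by (intro exI[of _ "\<bar>B\<bar>"]) auto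
qed

lemma net_approximable_family:
  assumes "\<forall>l<n. net_approximable \<sigma> S (\<phi> l)" and "\<eta> > 0"
  shows "\<exists>gs. \<forall>l<n. shallow_net \<sigma> (gs l) \<and> (\<forall>x\<in>S. \<bar>\<phi> l x - gs l x\<bar> < \<eta>)"
proof -
  have "\<forall>l. \<exists>g. l < n \<longrightarrow> shallow_net \<sigma> g \<and> (\<forall>x\<in>S. \<bar>\<phi> l x - g x\<bar> < \<eta>)"
    using assms unfolding net_approximable_def by blast
  then show ?thesis
    by (rule choice[THEN exE]) blast
qed

lemma cpd_kernel_shallow_net_approx:
  fixes S :: "'b::real_inner set" and f :: "'b \<Rightarrow> 'a::topological_space"
    and g :: "'a \<Rightarrow> 'a \<Rightarrow> real"
  assumes cpd: "cpd_kernel_on Y g" and S: "compact S"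
    and f: "continuous_on S f" and fY: "f ` S \<subseteq> Y"
    and universal: "\<And>\<phi>. continuous_on S \<phi> \<Longrightarrow> net_approximable \<sigma> S \<phi>"
    and "\<epsilon> > 0"
  shows "\<exists>(n::nat) gs gu. (\<forall>l<n. shallow_net \<sigma> (gs l)) \<and> shallow_net \<sigma> gu \<and>
           (\<forall>x\<in>S. \<forall>x'\<in>S. \<bar>g (f x) (f x') - ((\<Sum>l<n. gs l x * gs l x') + gu x + gu x')\<bar> < \<epsilon>)"
proof -
  obtain n :: nat and \<phi> H where \<phi>: "\<forall>l<n. continuous_on S (\<phi> l)" and H: "continuous_on S H"
    and features: "\<forall>x\<in>S. \<forall>x'\<in>S.
      \<bar>g (f x) (f x') - ((\<Sum>l<n. \<phi> l x * \<phi> l x') + H x + H x')\<bar> \<le> \<epsilon> / 2"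
    using cpd_kernel_feature_approx[OF cpd S f fY, of "\<epsilon> / 2"] \<open>\<epsilon> > 0\<close> by auto
  obtain B where "B \<ge> 0" and \<phi>_bound: "\<forall>l<n. \<forall>x\<in>S. \<bar>\<phi> l x\<bar> \<le> B"
    using compact_continuous_family_bound[OF S \<phi>] by blast
  define \<eta> where "\<eta> = min 1 (\<epsilon> / (4 * (n + 2) * (2 * B + 1)))"
  have "\<eta> > 0" and "\<eta> \<le> 1"
    using \<open>\<epsilon> > 0\<close> \<open>B \<ge> 0\<close> by (simp_all add: \<eta>_def)
  have \<eta>_small: "(n + 2) * (\<eta> * (2 * B + 1)) \<le> \<epsilon> / 4"
  proof -
    have "0 < 4 * (n + 2) * (2 * B + 1)"
      using \<open>B \<ge> 0\<close> by (simp add: add_nonneg_pos)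
    moreover have "\<eta> \<le> \<epsilon> / (4 * (n + 2) * (2 * B + 1))"
      by (simp add: \<eta>_def)
    ultimately have "\<eta> * (4 * (n + 2) * (2 * B + 1)) \<le> \<epsilon>"
      by (simp add: pos_le_divide_eq)
    then show ?thesis
      by (simp add: algebra_simps)
  qed
  obtain gs where gs: "\<forall>l<n. shallow_net \<sigma> (gs l) \<and> (\<forall>x\<in>S. \<bar>\<phi> l x - gs l x\<bar> < \<eta>)"
    using net_approximable_family[of n \<sigma> S \<phi>] universal \<phi> \<open>\<eta> > 0\<close> by blast
  obtain gu where gu: "shallow_net \<sigma> gu" "\<forall>x\<in>S. \<bar>H x - gu x\<bar> < \<eta>"
    using universal[OF H] \<open>\<eta> > 0\<close> unfolding net_approximable_def by blast
  have "\<bar>g (f x) (f x') - ((\<Sum>l<n. gs l x * gs l x') + gu x + gu x')\<bar> < \<epsilon>"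
    if x: "x \<in> S" and x': "x' \<in> S" for x x'
  proof -
    define E where "E = \<eta> * (2 * B + 1)"
    have "\<bar>(\<Sum>l<n. gs l x * gs l x') - (\<Sum>l<n. \<phi> l x * \<phi> l x')\<bar> \<le> n * E"
      unfolding E_def using gs \<phi>_bound x x' \<open>\<eta> \<le> 1\<close>
      by (intro gram_sum_perturbation) (auto simp: abs_minus_commute less_imp_le)
    moreover have "\<eta> \<le> E"
      using \<open>\<eta> > 0\<close> \<open>B \<ge> 0\<close> by (simp add: E_def)
    then have "\<bar>H x - gu x\<bar> \<le> E" and "\<bar>H x' - gu x'\<bar> \<le> E"
      using gu(2) x x' by fastforce+
    moreover have "\<bar>g (f x) (f x') - ((\<Sum>l<n. \<phi> l x * \<phi> l x') + H x + H x')\<bar> \<le> \<epsilon> / 2"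
      using features x x' by blast
    moreover have "n * E + 2 * E \<le> \<epsilon> / 4"
      using \<eta>_small by (simp add: E_def algebra_simps)
    ultimately show ?thesis
      using \<open>\<epsilon> > 0\<close> by linarith
  qed
  then show ?thesis
    using gs gu(1) by blast
qed

lemma compact_cube: "compact (cube M :: (real ^ 'n) set)"
proof -
  have "cube M = cbox (\<chi> i. - M) (\<chi> i. M :: real ^ 'n)"
  proof (rule set_eqI)
    fix x :: "real ^ 'n"
    show "x \<in> cube M \<longleftrightarrow> x \<in> cbox (\<chi> i. - M) (\<chi> i. M)"
      unfolding cube_def mem_box_cart by (simp add: abs_le_iff) (meson minus_le_iff)
  qed
  then show ?thesis
    by simp
qed

theorem theorem4p1:
  fixes M :: real and Y :: "'a::euclidean_space set"
    and fstar :: "real^'p \<Rightarrow> 'a" and gstar :: "'a \<Rightarrow> 'a \<Rightarrow> real"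
    and \<sigma> :: "real \<Rightarrow> real" and \<epsilon> :: real
  assumes "M > 0"
    and "closed Y"
    and "continuous_on (cube M) fstar" and "fstar ` cube M \<subseteq> Y"
    and "cpd_kernel_on Y gstar"
    and "\<sigma> = relu \<or>
         (continuous_on UNIV \<sigma> \<and> bounded (range \<sigma>) \<and> mono \<sigma> \<and> \<not> (\<exists>a. \<forall>x. \<sigma> x = a))"
    and "\<epsilon> > 0"
  shows "\<exists>K0 T0'. \<forall>K\<ge>K0. \<exists>T0. \<forall>T\<ge>T0. \<forall>T'\<ge>T0'.
           \<exists>(A::nat \<Rightarrow> nat \<Rightarrow> real) (B::nat \<Rightarrow> real^'p) (c::nat \<Rightarrow> real)
            (e::nat \<Rightarrow> real) (F::nat \<Rightarrow> real^'p) (ob::nat \<Rightarrow> real).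
             \<forall>x\<in>cube M. \<forall>x'\<in>cube M.
               \<bar>gstar (fstar x) (fstar x')
                 - ((\<Sum>k<K. fpsi \<sigma> T A B c x k * fpsi \<sigma> T A B c x' k)
                    + uxi \<sigma> T' e F ob x + uxi \<sigma> T' e F ob x')\<bar> < \<epsilon>"
proof -
  have universal: "net_approximable \<sigma> (cube M) \<phi>" if "continuous_on (cube M) \<phi>" for \<phi>
    using assms(6) relu_net_approximable sigmoid_net_approximable compact_cube that by blast
  obtain n :: nat and gs gu where gs: "\<forall>l<n. shallow_net \<sigma> (gs l)" and gu: "shallow_net \<sigma> gu"
    and approx: "\<forall>x\<in>cube M. \<forall>x'\<in>cube M.
      \<bar>gstar (fstar x) (fstar x') - ((\<Sum>l<n. gs l x * gs l x') + gu x + gu x')\<bar> < \<epsilon>"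
    using cpd_kernel_shallow_net_approx[OF assms(5) compact_cube assms(3,4) universal assms(7)]
    by blast
  obtain T0 where T0: "\<forall>T\<ge>T0. \<exists>A B c. \<forall>k x. fpsi \<sigma> T A B c x k = (if k < n then gs k x else 0)"
    using fpsi_padded_hidden_layer[OF gs] by blast
  obtain T0' where T0': "\<forall>T'\<ge>T0'. \<exists>e F ob. \<forall>x. uxi \<sigma> T' e F ob x = gu x"
    using uxi_shallow_net[OF gu] by blast
  show ?thesis
  proof (rule exI[of _ n], rule exI[of _ T0'], intro allI impI, rule exI[of _ T0], intro allI impI)
    fix K T T' assume "n \<le> K" "T0 \<le> T" "T0' \<le> T'"
    then obtain A B c e F ob where A: "\<forall>k x. fpsi \<sigma> T A B c x k = (if k < n then gs k x else 0)"
      and e: "\<forall>x. uxi \<sigma> T' e F ob x = gu x"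
      using T0 T0' by meson
    have "(\<Sum>k<K. fpsi \<sigma> T A B c x k * fpsi \<sigma> T A B c x' k) = (\<Sum>l<n. gs l x * gs l x')" for x x'
      using \<open>n \<le> K\<close> by (intro sum.mono_neutral_cong_right) (auto simp: A)
    then show "\<exists>A B c e F ob. \<forall>x\<in>cube M. \<forall>x'\<in>cube M.
        \<bar>gstar (fstar x) (fstar x') - ((\<Sum>k<K. fpsi \<sigma> T A B c x k * fpsi \<sigma> T A B c x' k)
          + uxi \<sigma> T' e F ob x + uxi \<sigma> T' e F ob x')\<bar> < \<epsilon>"
      using approx e
      by (intro exI[of _ A] exI[of _ B] exI[of _ c] exI[of _ e] exI[of _ F] exI[of _ ob]) simp
  qed
qed

end
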